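(* Let $\mathcal{E}$ be a finite-dimensional real inner product space, $\mathcal{K}\subseteq\mathcal{E}$ a closed convex cone, $A:\mathbb{R}^m\to\mathcal{E}$ linear with adjoint $A^*$, $c\in\mathcal{E}$, $b\in\mathbb{R}^m$. Consider (P): maximize $\langle b,y\rangle$ s.t. $c-Ay\in\mathcal{K}$; (D): minimize $\langle c,x\rangle$ s.t. $A^*x=b$, $x\in\mathcal{K}^*$. Let $s_0,\dots,s_{N-1}\in\mathcal{E}$ and faces $\mathcal{F}_0=\mathcal{K}$, $\mathcal{F}_{i+1}=\mathcal{F}_i\cap s_i^{\perp}$ satisfy $\langle c,s_i\rangle=0$, $A^*s_i=0$, $s_i\in\mathcal{F}_i^*\setminus\mathcal{F}_i^{\perp}$ for $i=0,\dots,N-1$, and put $\mathcal{F}=\mathcal{F}_N$. Consider (R/P): maximize $\langle b,y\rangle$ s.t. $c-Ay\in\mathcal{F}$; (R/D): minimize $\langle c,x\rangle$ s.t. $A^*x=b$, $x\in\mathcal{F}^*$. The recovery procedure takes an optimal solution $x$ of (R/D) and, for $i=N-1$ down to $0$, finds (if one exists) $\alpha\in\mathbb{R}$ with $x+\alpha s_i\in\mathcal{F}_i^*$ and replaces $x$ by $x+\alpha s_i$; if for some $i$ no such $\alpha$ exists it reports failure, otherwise it outputs the final $x$ and is said to succeed. Then: (1) If $\mathcal{F}_i^*+\operatorname{lin}s_i$ is closed for every $i=0,\dots,N-1$, the procedure succeeds and outputs an optimal solution of (D). (2) Suppose $y$ is an optimal solution of (R/P) and $x$ is an optimal solution of (R/D)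 with $\langle c,x\rangle=\langle b,y\rangle$. If the procedure succeeds on input $x$, then (P) and (D) have optimal solutions with zero duality gap.
   Context: $\mathcal{K}^*=\{z:\langle z,x\rangle\ge0\ \forall x\in\mathcal{K}\}$ is the dual cone; $\mathcal{F}^{\perp}$ is the orthogonal complement of the span of $\mathcal{F}$; $s^{\perp}=\{x:\langle s,x\rangle=0\}$; $\operatorname{lin}s$ is the line spanned by $s$. *)

theory Defs
  imports "HOL-Analysis.Analysis"
begin

definition dual_cone :: "'a::real_inner set \<Rightarrow> 'a set" where
  "dual_cone K = {z. \<forall>x\<in>K. 0 \<le> z \<bullet> x}"

fun face_seq :: "'a::real_inner set \<Rightarrow> (nat \<Rightarrow> 'a) \<Rightarrow> nat \<Rightarrow> 'a set" where
  "face_seq K s 0 = K"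
| "face_seq K s (Suc i) = face_seq K s i \<inter> {x. s i \<bullet> x = 0}"

definition primal_opt :: "'e::euclidean_space set \<Rightarrow> ('m::euclidean_space \<Rightarrow> 'e) \<Rightarrow> 'm \<Rightarrow> 'e \<Rightarrow> 'm \<Rightarrow> bool" where
  "primal_opt K A b c y \<longleftrightarrow> c - A y \<in> K \<and> (\<forall>y'. c - A y' \<in> K \<longrightarrow> b \<bullet> y' \<le> b \<bullet> y)"

definition dual_opt :: "'e::euclidean_space set \<Rightarrow> ('m::euclidean_space \<Rightarrow> 'e) \<Rightarrow> 'm \<Rightarrow> 'e \<Rightarrow> 'e \<Rightarrow> bool" where
  "dual_opt K A b c x \<longleftrightarrow> adjoint A x = b \<and> x \<in> dual_cone K \<and>
     (\<forall>x'. adjoint A x' = b \<and> x' \<in> dual_cone K \<longrightarrow> c \<bullet> x \<le> c \<bullet> x')"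

text \<open>Recovery procedure (nondeterministic in the choice of alpha).\<close>
definition recovery_reaches :: "'a::real_inner set \<Rightarrow> (nat \<Rightarrow> 'a) \<Rightarrow> nat \<Rightarrow> 'a \<Rightarrow> nat \<Rightarrow> (nat \<Rightarrow> 'a) \<Rightarrow> bool" where
  "recovery_reaches K s N x k z \<longleftrightarrow> z N = x \<and>
     (\<forall>i. k \<le> i \<and> i < N \<longrightarrow>
        (\<exists>\<alpha>::real. z i = z (Suc i) + \<alpha> *\<^sub>R s i \<and> z i \<in> dual_cone (face_seq K s i)))"

definition recovery_fails :: "'a::real_inner set \<Rightarrow> (nat \<Rightarrow> 'a) \<Rightarrow> nat \<Rightarrow> 'a \<Rightarrow> bool" where
  "recovery_fails K s N x \<longleftrightarrow> (\<exists>k z. 0 < k \<and> k \<le> N \<and> recovery_reaches K s N x k z \<and>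
     \<not> (\<exists>\<alpha>::real. z k + \<alpha> *\<^sub>R s (k - 1) \<in> dual_cone (face_seq K s (k - 1))))"

definition recovery_output :: "'a::real_inner set \<Rightarrow> (nat \<Rightarrow> 'a) \<Rightarrow> nat \<Rightarrow> 'a \<Rightarrow> 'a \<Rightarrow> bool" where
  "recovery_output K s N x x' \<longleftrightarrow> (\<exists>z. recovery_reaches K s N x 0 z \<and> z 0 = x')"

end

theory Submission
  imports Defs
begin

text \<open>Every step of the recovery procedure changes \<open>x\<close> by a multiple of some \<open>s\<^sub>i\<close> with
  \<open>\<langle>c, s\<^sub>i\<rangle> = 0\<close> and \<open>A\<^sup>* s\<^sub>i = 0\<close>, so the dual objective and the equality constraint are
  preserved, and the final point lies in \<open>\<K>\<^sup>*\<close>. Since \<open>\<K>\<^sup>* \<subseteq> \<F>\<^sup>*\<close>, a (D)-feasible point with the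
  optimal value of (R/D) is optimal for (D); and a (D)-feasible point whose value equals that
  of a (P)-feasible point certifies optimality of both by weak duality.
  The procedure cannot fail when \<open>\<F>\<^sub>i\<^sup>* + lin s\<^sub>i\<close> is closed: by the bipolar theorem the dual of
  \<open>\<F>\<^sub>i\<^sup>* + lin s\<^sub>i\<close> is \<open>\<F>\<^sub>i \<inter> s\<^sub>i\<^sup>\<perp> = \<F>\<^sub>i\<^sub>+\<^sub>1\<close>, so \<open>\<F>\<^sub>i\<^sub>+\<^sub>1\<^sup>*\<close> is the closure of \<open>\<F>\<^sub>i\<^sup>* + lin s\<^sub>i\<close>.\<close>

lemma dual_coneD: "z \<in> dual_cone K \<Longrightarrow> x \<in> K \<Longrightarrow> 0 \<le> z \<bullet> x"
  by (simp add: dual_cone_def)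

lemma dual_cone_antimono: "A \<subseteq> B \<Longrightarrow> dual_cone B \<subseteq> dual_cone A"
  by (auto simp: dual_cone_def)

lemma convex_cone_dual_cone: "convex_cone (dual_cone K)"
  by (auto simp: convex_cone_iff dual_cone_def inner_add_left)

lemma dual_cone_dual_cone:
  fixes C :: "'a::euclidean_space set"
  assumes "closed C" "convex_cone C"
  shows "dual_cone (dual_cone C) = C"
proof
  show "C \<subseteq> dual_cone (dual_cone C)"
    by (auto simp: dual_cone_def inner_commute)
  show "dual_cone (dual_cone C) \<subseteq> C"
  proof
    fix z assume z: "z \<in> dual_cone (dual_cone C)"
    show "z \<in> C"
    proof (rule ccontr)
      assume "z \<notin> C"
      then obtain a \<beta> where a: "a \<bullet> z < \<beta>" "\<forall>x\<in>C. \<beta> < a \<bullet> x"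
        using separating_hyperplane_closed_point assms convex_cone_def by metis
      have "\<beta> < 0"
        using a(2) convex_cone_contains_0[OF assms(2)] by force
      have "a \<in> dual_cone C"
        unfolding dual_cone_def
      proof (intro CollectI ballI, rule ccontr)
        fix x assume x: "x \<in> C" "\<not> 0 \<le> a \<bullet> x"
        \<comment> \<open>scale \<open>x\<close> onto the separating hyperplane\<close>
        have "(\<beta> / (a \<bullet> x)) *\<^sub>R x \<in> C"
          using x \<open>\<beta> < 0\<close> assms(2) by (intro convex_cone_scaleR) (auto simp: divide_nonpos_neg)
        then have "\<beta> < \<beta> / (a \<bullet> x) * (a \<bullet> x)"
          using a(2) by fastforce
        then show False
          using x(2) by simp
      qed
      then have "0 \<le> z \<bullet> a"
        using z by (simp add: dual_cone_def)
      then show False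
        using a(1) \<open>\<beta> < 0\<close> by (simp add: inner_commute)
    qed
  qed
qed

lemma dual_cone_Int_hyperplane_subset:
  fixes F :: "'a::euclidean_space set"
  assumes F: "closed F" "convex_cone F"
    and closed_sum: "closed {u + v | u v. u \<in> dual_cone F \<and> v \<in> span {s}}"
  shows "dual_cone (F \<inter> {x. s \<bullet> x = 0}) \<subseteq> {u + v | u v. u \<in> dual_cone F \<and> v \<in> span {s}}"
    (is "_ \<subseteq> ?S")
proof -
  have "?S = (\<Union>u\<in>dual_cone F. \<Union>v\<in>span {s}. {u + v})"
    by auto
  then have "convex_cone ?S"
    by (simp add: convex_cone_sums convex_cone_dual_cone convex_cone_span)
  have "dual_cone ?S \<subseteq> F \<inter> {x. s \<bullet> x = 0}"
  proof
    fix w assume w: "w \<in> dual_cone ?S"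
    have multiple: "t *\<^sub>R s \<in> ?S" for t
      using convex_cone_contains_0[OF convex_cone_dual_cone, of F] span_mul[OF span_base, of s "{s}" t]
      by (intro CollectI exI[of _ 0] exI[of _ "t *\<^sub>R s"]) simp
    have "0 \<le> w \<bullet> (t *\<^sub>R s)" for t
      by (rule dual_coneD[OF w multiple])
    from this[of 1] this[of "-1"] have "s \<bullet> w = 0"
      by (simp add: inner_commute)
    moreover have "u \<in> ?S" if "u \<in> dual_cone F" for u
      using that span_zero[of "{s}"] by (intro CollectI exI[of _ u] exI[of _ 0]) simp
    then have "w \<in> dual_cone (dual_cone F)"
      using w by (auto simp: dual_cone_def)
    ultimately show "w \<in> F \<inter> {x. s \<bullet> x = 0}"
      using dual_cone_dual_cone[OF F] by simp
  qed
  then have "dual_cone (F \<inter> {x. s \<bullet> x = 0}) \<subseteq> dual_cone (dual_cone ?S)"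
    by (rule dual_cone_antimono)
  also have "\<dots> = ?S"
    by (rule dual_cone_dual_cone[OF closed_sum \<open>convex_cone ?S\<close>])
  finally show ?thesis .
qed

lemma face_seq_subset: "face_seq K s i \<subseteq> K"
  by (induction i) auto

lemma closed_face_seq: "closed K \<Longrightarrow> closed (face_seq K s i)"
  by (induction i) (auto intro!: closed_Int closed_hyperplane)

lemma convex_cone_face_seq: "convex_cone K \<Longrightarrow> convex_cone (face_seq K s i)"
  by (induction i) (auto simp: convex_cone_iff inner_add_right)

lemma recovery_reaches_dual_cone:
  assumes "recovery_reaches K s N x k z" "k \<le> N" "x \<in> dual_cone (face_seq K s N)"
  shows "z k \<in> dual_cone (face_seq K s k)"
  using assms unfolding recovery_reaches_def by (cases "k = N") auto

lemma recovery_reaches_invariants: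
  fixes A :: "'m::euclidean_space \<Rightarrow> 'e::euclidean_space"
  assumes r: "recovery_reaches K s N x k z" and "k \<le> N" and A: "linear A"
    and s_c: "\<And>i. i < N \<Longrightarrow> c \<bullet> s i = 0" and s_A: "\<And>i. i < N \<Longrightarrow> adjoint A (s i) = 0"
  shows "adjoint A (z k) = adjoint A x \<and> c \<bullet> z k = c \<bullet> x"
  using \<open>k \<le> N\<close>
proof (induction k rule: inc_induct)
  case base
  then show ?case
    using r by (simp add: recovery_reaches_def)
next
  case (step n)
  then obtain \<alpha> where z: "z n = z (Suc n) + \<alpha> *\<^sub>R s n"
    using r unfolding recovery_reaches_def by auto
  have adj: "linear (adjoint A)"
    by (rule adjoint_linear[OF A])
  have "adjoint A (z n) = adjoint A (z (Suc n))"
    using z s_A[of n] step.hyps by (simp add: linear_add[OF adj] linear_scale[OF adj])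
  moreover have "c \<bullet> z n = c \<bullet> z (Suc n)"
    using z s_c[of n] step.hyps by (simp add: inner_add_right)
  ultimately show ?case
    using step.IH by simp
qed

lemma recovery_reaches_extend:
  assumes r: "recovery_reaches K s N x (Suc n) z" and "n < N"
    and \<alpha>: "z (Suc n) + \<alpha> *\<^sub>R s n \<in> dual_cone (face_seq K s n)"
  shows "recovery_reaches K s N x n (z(n := z (Suc n) + \<alpha> *\<^sub>R s n))"
  unfolding recovery_reaches_def
proof (intro conjI allI impI)
  show "(z(n := z (Suc n) + \<alpha> *\<^sub>R s n)) N = x"
    using r \<open>n < N\<close> by (simp add: recovery_reaches_def)
  fix i assume i: "n \<le> i \<and> i < N"
  show "\<exists>\<beta>. (z(n := z (Suc n) + \<alpha> *\<^sub>R s n)) i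
      = (z(n := z (Suc n) + \<alpha> *\<^sub>R s n)) (Suc i) + \<beta> *\<^sub>R s i
    \<and> (z(n := z (Suc n) + \<alpha> *\<^sub>R s n)) i \<in> dual_cone (face_seq K s i)"
  proof (cases "i = n")
    case True
    then show ?thesis
      using \<alpha> by auto
  next
    case False
    then show ?thesis
      using r i unfolding recovery_reaches_def by simp
  qed
qed

lemma recovery_output_if_not_fails:
  assumes "\<not> recovery_fails K s N x"
  shows "\<exists>x'. recovery_output K s N x x'"
proof -
  have "\<exists>z. recovery_reaches K s N x k z" if "k \<le> N" for k
    using that
  proof (induction k rule: inc_induct)
    case base
    show ?case
      by (rule exI[of _ "\<lambda>_. x"]) (auto simp: recovery_reaches_def)
  next
    case (step n)
    then obtain z where r: "recovery_reaches K s N x (Suc n) z"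
      by blast
    with step.hyps assms obtain \<alpha> where "z (Suc n) + \<alpha> *\<^sub>R s n \<in> dual_cone (face_seq K s n)"
      unfolding recovery_fails_def by (metis Suc_le_eq diff_Suc_1 zero_less_Suc)
    then show ?case
      using recovery_reaches_extend[OF r] step.hyps by blast
  qed
  then show ?thesis
    by (auto simp: recovery_output_def)
qed

lemma recovery_output_feasible:
  fixes A :: "'m::euclidean_space \<Rightarrow> 'e::euclidean_space"
  assumes "recovery_output K s N x x'" "x \<in> dual_cone (face_seq K s N)" "linear A"
    and "\<And>i. i < N \<Longrightarrow> c \<bullet> s i = 0" "\<And>i. i < N \<Longrightarrow> adjoint A (s i) = 0"
  shows "x' \<in> dual_cone K \<and> adjoint A x' = adjoint A x \<and> c \<bullet> x' = c \<bullet> x"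
proof -
  obtain z where "recovery_reaches K s N x 0 z" "z 0 = x'"
    using assms(1) by (auto simp: recovery_output_def)
  then show ?thesis
    using recovery_reaches_dual_cone[of K s N x 0 z] recovery_reaches_invariants[of K s N x 0 z A c]
      assms by simp
qed

lemma weak_duality:
  fixes A :: "'m::euclidean_space \<Rightarrow> 'e::euclidean_space"
  assumes "linear A" "c - A y \<in> K" "x \<in> dual_cone K" "adjoint A x = b"
  shows "b \<bullet> y \<le> c \<bullet> x"
proof -
  have "b \<bullet> y = x \<bullet> A y"
    using adjoint_clauses(2)[OF assms(1)] assms(4) by metis
  moreover have "0 \<le> x \<bullet> (c - A y)"
    using assms(2,3) by (simp add: dual_cone_def)
  ultimately show ?thesis
    by (simp add: inner_diff_right inner_commute)
qed

lemma optimal_if_objectives_equal: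
  fixes A :: "'m::euclidean_space \<Rightarrow> 'e::euclidean_space"
  assumes A: "linear A" and y: "c - A y \<in> K" and x: "x \<in> dual_cone K" "adjoint A x = b"
    and eq: "c \<bullet> x = b \<bullet> y"
  shows "primal_opt K A b c y \<and> dual_opt K A b c x"
proof -
  have "b \<bullet> y' \<le> b \<bullet> y" if "c - A y' \<in> K" for y'
    using weak_duality[OF A that x] eq by simp
  moreover have "c \<bullet> x \<le> c \<bullet> x'" if "x' \<in> dual_cone K" "adjoint A x' = b" for x'
    using weak_duality[OF A y that] eq by simp
  ultimately show ?thesis
    using y x by (auto simp: primal_opt_def dual_opt_def)
qed

lemma dual_opt_if_relaxation_value:
  assumes "F \<subseteq> K" and x: "dual_opt F A b c x"
    and x': "x' \<in> dual_cone K" "adjoint A x' = b" "c \<bullet> x' = c \<bullet> x"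
  shows "dual_opt K A b c x'"
proof -
  have "c \<bullet> x \<le> c \<bullet> x''" if "adjoint A x'' = b" "x'' \<in> dual_cone K" for x''
    using x that dual_cone_antimono[OF \<open>F \<subseteq> K\<close>] by (auto simp: dual_opt_def)
  then show ?thesis
    using x' by (auto simp: dual_opt_def)
qed

lemma recovery_never_fails:
  fixes K :: "'a::euclidean_space set"
  assumes K: "closed K" "convex_cone K"
    and closed_sums: "\<And>i. i < N \<Longrightarrow>
      closed {u + v | u v. u \<in> dual_cone (face_seq K s i) \<and> v \<in> span {s i}}"
    and x: "x \<in> dual_cone (face_seq K s N)"
  shows "\<not> recovery_fails K s N x"
proof
  assume "recovery_fails K s N x"
  then obtain k z where k: "0 < k" "k \<le> N" and r: "recovery_reaches K s N x k z"
    and stuck: "\<not> (\<exists>\<alpha>. z k + \<alpha> *\<^sub>R s (k - 1) \<in> dual_cone (face_seq K s (k - 1)))"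
    unfolding recovery_fails_def by blast
  define i where "i = k - 1"
  have "i < N" "k = Suc i"
    using k by (auto simp: i_def)
  then have "z k \<in> dual_cone (face_seq K s (Suc i))"
    using recovery_reaches_dual_cone[OF r k(2) x] by simp
  then have "z k \<in> {u + v | u v. u \<in> dual_cone (face_seq K s i) \<and> v \<in> span {s i}}"
    using dual_cone_Int_hyperplane_subset[OF closed_face_seq[OF K(1)] convex_cone_face_seq[OF K(2)]
        closed_sums[OF \<open>i < N\<close>]] by auto
  then obtain u \<beta> where "u \<in> dual_cone (face_seq K s i)" "z k = u + \<beta> *\<^sub>R s i"
    by (auto simp: span_singleton)
  then have "z k + (- \<beta>) *\<^sub>R s i \<in> dual_cone (face_seq K s i)"
    by simp
  then show False
    using stuck \<open>k = Suc i\<close> by (metis diff_Suc_1)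
qed

text \<open>The hypothesis \<open>s_F\<close> (each \<open>s\<^sub>i\<close> exposes a proper face) is what makes the reduction
  meaningful, but neither claim depends on it.\<close>

theorem lemma8:
  fixes K :: "'e::euclidean_space set"
    and A :: "real^'m \<Rightarrow> 'e" and b :: "real^'m" and c :: "'e"
    and s :: "nat \<Rightarrow> 'e" and N :: nat
  assumes K: "closed K" "convex_cone K"
    and A: "linear A"
    and s_c: "\<And>i. i < N \<Longrightarrow> c \<bullet> s i = 0"
    and s_A: "\<And>i. i < N \<Longrightarrow> adjoint A (s i) = 0"
    and s_F: "\<And>i. i < N \<Longrightarrow>
               s i \<in> dual_cone (face_seq K s i) - orthogonal_comp (span (face_seq K s i))"
  shows "(\<forall>x. (\<forall>i<N. closed {u + v | u v. u \<in> dual_cone (face_seq K s i) \<and> v \<in> span {s i}})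
             \<and> dual_opt (face_seq K s N) A b c x
           \<longrightarrow> \<not> recovery_fails K s N x
               \<and> (\<exists>x'. recovery_output K s N x x')
               \<and> (\<forall>x'. recovery_output K s N x x' \<longrightarrow> dual_opt K A b c x'))
         \<and> (\<forall>x y. primal_opt (face_seq K s N) A b c y \<and> dual_opt (face_seq K s N) A b c x
             \<and> c \<bullet> x = b \<bullet> y \<and> (\<exists>x'. recovery_output K s N x x')
           \<longrightarrow> (\<exists>y' x'. primal_opt K A b c y' \<and> dual_opt K A b c x' \<and> c \<bullet> x' = b \<bullet> y'))"
proof -
  have recovery: "\<not> recovery_fails K s N x \<and> (\<exists>x'. recovery_output K s N x x')
      \<and> (\<forall>x'. recovery_output K s N x x' \<longrightarrow> dual_opt K A b c x')"
    if "\<forall>i<N. closed {u + v | u v. u \<in> dual_cone (face_seq K s i) \<and> v \<in> span {s i}}"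
      and x: "dual_opt (face_seq K s N) A b c x" for x
  proof -
    have "\<not> recovery_fails K s N x"
      using that recovery_never_fails[OF K] by (simp add: dual_opt_def)
    moreover have "dual_opt K A b c x'" if "recovery_output K s N x x'" for x'
    proof -
      have "x' \<in> dual_cone K" "adjoint A x' = b" "c \<bullet> x' = c \<bullet> x"
        using recovery_output_feasible[OF that _ A s_c s_A] x by (auto simp: dual_opt_def)
      then show ?thesis
        by (rule dual_opt_if_relaxation_value[OF face_seq_subset x])
    qed
    ultimately show ?thesis
      using recovery_output_if_not_fails by blast
  qed
  have strong_duality: "\<exists>y' x'. primal_opt K A b c y' \<and> dual_opt K A b c x' \<and> c \<bullet> x' = b \<bullet> y'"
    if y: "primal_opt (face_seq K s N) A b c y" and x: "dual_opt (face_seq K s N) A b c x"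
      and "c \<bullet> x = b \<bullet> y" and "recovery_output K s N x x'" for x y x'
  proof -
    have "x' \<in> dual_cone K" "adjoint A x' = b" "c \<bullet> x' = b \<bullet> y"
      using that recovery_output_feasible[OF _ _ A s_c s_A] by (auto simp: dual_opt_def)
    moreover have "c - A y \<in> K"
      using y face_seq_subset by (auto simp: primal_opt_def)
    ultimately show ?thesis
      using optimal_if_objectives_equal[OF A] by blast
  qed
  show ?thesis
    using recovery strong_duality by blast
qed

end
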